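(* Let $n\geq0$ be an integer. Then $\dim_{\mathbb C}\big(\mathscr M_n(x_1)\cap\mathscr M_n(x_2)\cap\mathscr M_n(x_3)\big)=0$ if $n<t_1+t_2+t_3$, and equals $2(n-t_1-t_2-t_3+1)$ if $n\geq t_1+t_2+t_3$.
   Context: Fix real numbers $k_1,k_2,k_3$. For $i=1,2,3$ let $R_i$ be the operator on functions on $\mathbb R^3$ replacing $x_i$ by $-x_i$, and $T_if=\frac{\partial f}{\partial x_i}+k_i\frac{f-R_if}{x_i}$ (Dunkl operators). Let $\sigma_1=\begin{pmatrix}0&1\\1&0\end{pmatrix}$, $\sigma_2=\begin{pmatrix}0&-\sqrt{-1}\\ \sqrt{-1}&0\end{pmatrix}$, $\sigma_3=\begin{pmatrix}1&0\\0&-1\end{pmatrix}$, and let $e_i$ act on $\mathbb C^2$ by $\sigma_i$. Tensor products are over $\mathbb R$; $\mathbb R[\cdots]_m$ denotes homogeneous polynomials of degree $m$. Let $\mathbf D=e_1\otimes T_1+e_2\otimes T_2+e_3\otimes T_3$ and $\mathscr M_n=\ker(\mathbf D|_{\mathbb C^2\otimes\mathbb R[x_1,x_2,x_3]_n})$. For $i=1,2,3$ set $t_i=-2k_i$ if $2k_i$ is an odd negative integer, and $t_i=\infty$ otherwise (with the usual conventions for sums and comparisons with $\infty$). For $i=1,2,3$, $\mathscr M_n(x_i)=\mathscr M_n\cap\bigoplus_{j=t_i}^n\mathbb C^2\otimes(x_i^j\cdot\mathbb R[x_p,x_q]_{n-j})$ where $\{p,q\}=\{1,2,3\}\setminus\{i\}$,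 interpreted as $\{0\}$ if $n<t_i$. *)

theory Defs
  imports "HOL-Analysis.Analysis" "HOL-Library.Function_Algebras" "HOL-Library.Extended_Nat"
begin

text \<open>Polynomials in x1,x2,x3 with coefficients in C^2 (= C^2 tensor_R R[x1,x2,x3]) are
  represented by their coefficient functions: p alpha is the C^2-coefficient of the
  monomial x1^(alpha$1) x2^(alpha$2) x3^(alpha$3). Index i::3 corresponds to x_i.\<close>

type_synonym expo = "nat ^ 3"
type_synonym cpoly = "expo \<Rightarrow> complex ^ 2"

definition cscale :: "complex \<Rightarrow> cpoly \<Rightarrow> cpoly" where
  "cscale c p = (\<lambda>\<alpha>. c *s p \<alpha>)"

definition hom :: "nat \<Rightarrow> cpoly set" where
  "hom n = {p. \<forall>\<alpha>. p \<alpha> \<noteq> 0 \<longrightarrow> (\<Sum>j\<in>UNIV. \<alpha> $ j) = n}"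

definition pderiv_i :: "3 \<Rightarrow> cpoly \<Rightarrow> cpoly" where
  "pderiv_i i p = (\<lambda>\<alpha>. of_nat (\<alpha> $ i + 1) *s p (\<alpha> + axis i 1))"

definition refl_i :: "3 \<Rightarrow> cpoly \<Rightarrow> cpoly" where
  "refl_i i p = (\<lambda>\<alpha>. ((-1) ^ (\<alpha> $ i)) *s p \<alpha>)"

text \<open>Division by x_i (exact for polynomials divisible by x_i, such as f - R_i f).\<close>
definition divx_i :: "3 \<Rightarrow> cpoly \<Rightarrow> cpoly" where
  "divx_i i q = (\<lambda>\<alpha>. q (\<alpha> + axis i 1))"

definition dunkl :: "real ^ 3 \<Rightarrow> 3 \<Rightarrow> cpoly \<Rightarrow> cpoly" where
  "dunkl k i f = pderiv_i i f + cscale (complex_of_real (k $ i)) (divx_i i (f - refl_i i f))"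

definition sigma1 :: "complex ^ 2 ^ 2" where
  "sigma1 = (\<chi> r c. if r = c then 0 else 1)"
definition sigma2 :: "complex ^ 2 ^ 2" where
  "sigma2 = (\<chi> r c. if r = c then 0 else if r = 1 then - \<i> else \<i>)"
definition sigma3 :: "complex ^ 2 ^ 2" where
  "sigma3 = (\<chi> r c. if r \<noteq> c then 0 else if r = 1 then 1 else -1)"

definition sigma :: "3 \<Rightarrow> complex ^ 2 ^ 2" where
  "sigma i = (if i = 1 then sigma1 else if i = 2 then sigma2 else sigma3)"

definition dirac :: "real ^ 3 \<Rightarrow> cpoly \<Rightarrow> cpoly" where
  "dirac k f = (\<lambda>\<alpha>. \<Sum>i\<in>UNIV. sigma i *v dunkl k i f \<alpha>)"

definition Mker :: "real ^ 3 \<Rightarrow> nat \<Rightarrow> cpoly set" where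
  "Mker k n = {p \<in> hom n. dirac k p = 0}"

definition tpar :: "real ^ 3 \<Rightarrow> 3 \<Rightarrow> enat" where
  "tpar k i = (if \<exists>m::nat. odd m \<and> 2 * k $ i = - real m
               then enat (nat \<lfloor>- 2 * k $ i\<rfloor>) else \<infinity>)"

text \<open>M_n(x_i): elements of M_n lying in the sum over j = t_i..n of
  C^2 tensor x_i^j R[x_p,x_q]_(n-j), i.e. all monomials have x_i-degree at least t_i.\<close>
definition Mx :: "real ^ 3 \<Rightarrow> nat \<Rightarrow> 3 \<Rightarrow> cpoly set" where
  "Mx k n i = {p \<in> Mker k n. \<forall>\<alpha>. p \<alpha> \<noteq> 0 \<longrightarrow> tpar k i \<le> enat (\<alpha> $ i)}"

definition cdim :: "cpoly set \<Rightarrow> nat" where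
  "cdim S = vector_space.dim cscale S"

end

theory Submission
  imports Defs
begin

(* If some t_i is infinite, M_n(x_i) is zero. Otherwise k_i = -t_i/2 with t_i odd, and T_i maps
   x_i^a to a multiple of x_i^(a-1) that vanishes exactly for a = t_i. Componentwise, the Dirac
   equation at an exponent b with b_3 >= t_3 solves for the coefficient at b + e_3 in terms of those
   at b + e_1 and b + e_2. Hence an element of the intersection is determined by its layer of
   x_3-degree t_3, and conversely every C^2-valued polynomial on that layer extends; the extension
   keeps all exponents a_i >= t_i because the contribution of b + e_i carries the factor of
   x_i^(b_i + 1), which vanishes when b_i + 1 = t_i. The layer consists of the n - t_1 - t_2 - t_3 + 1
   exponents a with a_3 = t_3, a_1 >= t_1, a_2 >= t_2 and |a| = n. *)

lemma (in vector_space_pair) dim_image_eq_of_inj_on: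
  assumes V: "vs1.subspace V" and f: "Vector_Spaces.linear s1 s2 f" and inj: "inj_on f V"
  shows "vs2.dim (f ` V) = vs1.dim V"
proof -
  obtain B where B: "B \<subseteq> V" "vs1.independent B" "V \<subseteq> vs1.span B" "card B = vs1.dim V"
    using vs1.basis_exists by blast
  have span_B: "vs1.span B = V"
    using vs1.span_subspace[OF B(1) B(3) V] .
  have "vs2.independent (f ` B)"
    using linear_independent_injective_image[OF f B(2)] inj span_B by simp
  moreover have "vs2.span (f ` B) = f ` V"
    using linear_span_image[OF f] span_B by simp
  moreover have "card (f ` B) = card B"
    using inj B(1) by (meson card_image inj_on_subset)
  ultimately show ?thesis
    using vs2.dim_span_eq_card_independent B(4) by metis
qed

lemma vector_space_cscale: "vector_space cscale"
  by unfold_locales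
    (auto simp: cscale_def fun_eq_iff vector_add_ldistrib vector_sadd_rdistrib vector_smult_assoc)

global_interpretation cs: vector_space cscale
  by (rule vector_space_cscale)

global_interpretation cs_pair: vector_space_pair cscale cscale ..

lemma cscale_apply [simp]: "cscale c p a = c *s p a"
  by (simp add: cscale_def)

lemma sum_fun_apply: "(sum f A) x = (\<Sum>a\<in>A. f a x)"
  by (induction A rule: infinite_finite_induct) auto

definition suppset :: "expo set \<Rightarrow> cpoly set" where
  "suppset S = {q. \<forall>a. q a \<noteq> 0 \<longrightarrow> a \<in> S}"

lemma subspace_suppset: "cs.subspace (suppset S)"
  by (auto simp: cs.subspace_def suppset_def) (metis add.right_neutral)

definition unit_poly :: "expo \<times> 2 \<Rightarrow> cpoly" where
  "unit_poly p = (\<lambda>b. if b = fst p then axis (snd p) 1 else 0)"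

lemma unit_poly_apply: "unit_poly p b $ s = (if p = (b, s) then 1 else 0)"
  by (cases p) (auto simp: unit_poly_def axis_def)

lemma inj_unit_poly: "inj unit_poly"
proof (rule injI)
  fix p p' assume "unit_poly p = unit_poly p'"
  then have "unit_poly p (fst p) $ snd p = unit_poly p' (fst p) $ snd p" by simp
  then show "p = p'" by (simp add: unit_poly_apply split: if_splits)
qed

lemma sum_unit_poly_apply:
  assumes "finite A"
  shows "(\<Sum>p\<in>A. cscale (c p) (unit_poly p)) b $ s = (if (b, s) \<in> A then c (b, s) else 0)"
proof -
  have "(\<Sum>p\<in>A. cscale (c p) (unit_poly p)) b $ s = (\<Sum>p\<in>A. if p = (b, s) then c p else 0)"
    by (simp add: sum_fun_apply unit_poly_apply if_distrib cong: if_cong)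
  then show ?thesis
    using assms by (simp add: sum.delta')
qed

lemma suppset_expansion:
  assumes "finite S" and "q \<in> suppset S"
  shows "q = (\<Sum>p\<in>S \<times> UNIV. cscale (q (fst p) $ snd p) (unit_poly p))"
  using assms by (auto simp: fun_eq_iff vec_eq_iff sum_unit_poly_apply suppset_def)

lemma dim_suppset:
  assumes fin: "finite S"
  shows "cs.dim (suppset S) = 2 * card S"
proof -
  let ?B = "unit_poly ` (S \<times> UNIV)"
  have inj: "inj_on unit_poly (S \<times> UNIV)"
    using inj_unit_poly by (rule inj_on_subset) simp
  have "cs.independent ?B"
  proof (rule cs.independent_if_scalars_zero)
    fix f x assume zero: "(\<Sum>x\<in>?B. cscale (f x) x) = 0" and "x \<in> ?B"
    then obtain p where p: "p \<in> S \<times> UNIV" "x = unit_poly p" by blast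
    have "(\<Sum>q\<in>S \<times> UNIV. cscale (f (unit_poly q)) (unit_poly q)) = 0"
      using zero by (simp add: sum.reindex[OF inj])
    then have "(\<Sum>q\<in>S \<times> UNIV. cscale (f (unit_poly q)) (unit_poly q)) (fst p) $ snd p = 0"
      by simp
    then show "f x = 0"
      using p fin by (simp add: sum_unit_poly_apply)
  qed (use fin in simp)
  moreover have "suppset S \<subseteq> cs.span ?B"
  proof
    fix q assume "q \<in> suppset S"
    then have "q = (\<Sum>p\<in>S \<times> UNIV. cscale (q (fst p) $ snd p) (unit_poly p))"
      by (rule suppset_expansion[OF fin])
    also have "\<dots> \<in> cs.span ?B"
      by (intro cs.span_sum cs.span_scale cs.span_base) auto
    finally show "q \<in> cs.span ?B" .
  qed
  moreover have "?B \<subseteq> suppset S"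
    by (auto simp: suppset_def unit_poly_def split: if_splits)
  moreover have "card ?B = 2 * card S"
    using card_image[OF inj] fin by (simp add: card_cartesian_product)
  ultimately show ?thesis
    by (metis cs.dim_unique)
qed

(* The factor by which T_i maps x_i^a to x_i^(a-1): a for even a, a + 2 k_i for odd a. *)

definition dunkl_factor :: "real ^ 3 \<Rightarrow> 3 \<Rightarrow> nat \<Rightarrow> complex" where
  "dunkl_factor k i a = complex_of_real (real a + k $ i * (1 - (-1) ^ a))"

abbreviation e :: "3 \<Rightarrow> expo" where
  "e i \<equiv> axis i 1"

lemma dunkl_apply: "dunkl k i f a = dunkl_factor k i (a $ i + 1) *s f (a + e i)"
proof -
  have "(a + e i) $ i = a $ i + 1" by simp
  then show ?thesis
    by (simp add: dunkl_def pderiv_i_def divx_i_def refl_i_def dunkl_factor_def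
        vec_eq_iff algebra_simps)
qed

lemma sigma_mult_components:
  "(sigma1 *v v) $ 1 = v $ 2" "(sigma1 *v v) $ 2 = v $ 1"
  "(sigma2 *v v) $ 1 = - \<i> * v $ 2" "(sigma2 *v v) $ 2 = \<i> * v $ 1"
  "(sigma3 *v v) $ 1 = v $ 1" "(sigma3 *v v) $ 2 = - v $ 2"
  by (simp_all add: sigma1_def sigma2_def sigma3_def matrix_vector_mult_def sum_2)

lemma dirac_apply:
  "dirac k f a $ 1 = dunkl_factor k 1 (a $ 1 + 1) * f (a + e 1) $ 2
      - \<i> * dunkl_factor k 2 (a $ 2 + 1) * f (a + e 2) $ 2
      + dunkl_factor k 3 (a $ 3 + 1) * f (a + e 3) $ 1"
  "dirac k f a $ 2 = dunkl_factor k 1 (a $ 1 + 1) * f (a + e 1) $ 1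
      + \<i> * dunkl_factor k 2 (a $ 2 + 1) * f (a + e 2) $ 1
      - dunkl_factor k 3 (a $ 3 + 1) * f (a + e 3) $ 2"
  by (simp_all add: dirac_def sum_3 sigma_def dunkl_apply sigma_mult_components algebra_simps)

lemma linear_dirac: "Vector_Spaces.linear cscale cscale (dirac k)"
  by (simp add: Vector_Spaces.linear_iff vector_space_cscale fun_eq_iff vec_eq_iff forall_2
      dirac_apply algebra_simps)

definition dirac_lift :: "real ^ 3 \<Rightarrow> cpoly \<Rightarrow> expo \<Rightarrow> complex ^ 2" where
  "dirac_lift k p b = (let f = \<lambda>i. dunkl_factor k i (b $ i + 1) in
     vector [- (f 1 * p (b + e 1) $ 2 - \<i> * f 2 * p (b + e 2) $ 2) / f 3,
             (f 1 * p (b + e 1) $ 1 + \<i> * f 2 * p (b + e 2) $ 1) / f 3])"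

lemma dirac_eq_0_iff_lift:
  assumes "dunkl_factor k 3 (b $ 3 + 1) \<noteq> 0"
  shows "dirac k p b = 0 \<longleftrightarrow> p (b + e 3) = dirac_lift k p b"
  using assms
  by (simp add: vec_eq_iff forall_2 dirac_apply dirac_lift_def field_simps) (auto simp: algebra_simps)

lemma dirac_lift_cong:
  "p (b + e 1) = p' (b + e 1) \<Longrightarrow> p (b + e 2) = p' (b + e 2) \<Longrightarrow>
    dirac_lift k p b = dirac_lift k p' b"
  by (simp add: dirac_lift_def)

lemma dirac_lift_nonzero:
  assumes "dirac_lift k p b \<noteq> 0"
  obtains i where "i \<noteq> 3" "p (b + e i) \<noteq> 0" "dunkl_factor k i (b $ i + 1) \<noteq> 0"
proof -
  have "\<exists>i \<in> {1, 2}. p (b + e i) \<noteq> 0 \<and> dunkl_factor k i (b $ i + 1) \<noteq> 0"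
    using assms by (auto simp: dirac_lift_def vec_eq_iff forall_2)
  then obtain i where "i \<in> {1, 2}" "p (b + e i) \<noteq> 0" "dunkl_factor k i (b $ i + 1) \<noteq> 0"
    by blast
  moreover have "i \<noteq> 3"
    using \<open>i \<in> {1, 2}\<close> by auto
  ultimately show ?thesis
    using that by blast
qed

lemma dirac_eq_0_propagate_zero:
  assumes "dirac k p b = 0" and "dunkl_factor k 3 (b $ 3 + 1) \<noteq> 0"
    and "p (b + e 1) = 0" and "p (b + e 2) = 0"
  shows "p (b + e 3) = 0"
proof -
  have "dirac_lift k p b = 0"
    using assms(3,4) by (simp add: dirac_lift_def vec_eq_iff forall_2)
  then show ?thesis
    using assms(1,2) dirac_eq_0_iff_lift by simp
qed

lemma Mx_subset_0_if_tpar_infinite: "tpar k i = \<infinity> \<Longrightarrow> Mx k n i \<subseteq> {0}"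
  by (auto simp: Mx_def fun_eq_iff)

locale odd_weights =
  fixes k :: "real ^ 3" and t :: "3 \<Rightarrow> nat"
  assumes odd_t: "\<And>i. odd (t i)" and k_eq: "\<And>i. k $ i = - real (t i) / 2"
begin

lemma tpar_eq: "tpar k i = enat (t i)"
proof -
  have "\<exists>m::nat. odd m \<and> 2 * k $ i = - real m"
    using odd_t k_eq by auto
  moreover have "nat \<lfloor>- 2 * k $ i\<rfloor> = t i"
    using k_eq[of i] by simp
  ultimately show ?thesis
    by (simp add: tpar_def)
qed

lemma dunkl_factor_eq_0_iff: "1 \<le> a \<Longrightarrow> dunkl_factor k i a = 0 \<longleftrightarrow> a = t i"
  using odd_t[of i] by (cases "even a") (auto simp: dunkl_factor_def k_eq)

definition cone :: "nat \<Rightarrow> expo set" where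
  "cone n = {a. (\<forall>i. t i \<le> a $ i) \<and> (\<Sum>i\<in>UNIV. a $ i) = n}"

lemma cone_lower_bound: "a \<in> cone n \<Longrightarrow> t i \<le> a $ i"
  by (simp add: cone_def)

definition layer :: "nat \<Rightarrow> nat \<Rightarrow> expo set" where
  "layer n j = {a \<in> cone n. a $ 3 = t 3 + j}"

definition Mcone :: "nat \<Rightarrow> cpoly set" where
  "Mcone n = suppset (cone n) \<inter> {p. dirac k p = 0}"

lemma Mx_inter_eq_Mcone: "Mx k n 1 \<inter> Mx k n 2 \<inter> Mx k n 3 = Mcone n"
  by (auto simp: Mx_def Mker_def hom_def Mcone_def cone_def suppset_def tpar_eq forall_3)

lemma subspace_Mcone: "cs.subspace (Mcone n)"
  unfolding Mcone_def
  by (intro cs.subspace_inter subspace_suppset cs_pair.linear_subspace_kernel linear_dirac)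

definition bottom_part :: "cpoly \<Rightarrow> cpoly" where
  "bottom_part p = (\<lambda>a. if a $ 3 = t 3 then p a else 0)"

lemma linear_bottom_part: "Vector_Spaces.linear cscale cscale bottom_part"
  by (simp add: Vector_Spaces.linear_iff vector_space_cscale bottom_part_def fun_eq_iff)

lemma Mcone_eq_0_if_bottom_part_eq_0:
  assumes p: "p \<in> Mcone n" and bottom: "bottom_part p = 0"
  shows "p = 0"
proof -
  have dirac: "dirac k p = 0" and supp: "\<And>a. p a \<noteq> 0 \<Longrightarrow> a \<in> cone n"
    using p by (auto simp: Mcone_def suppset_def)
  have on_layer: "p a = 0" if "a $ 3 = t 3 + j" for j a
    using that
  proof (induction j arbitrary: a)
    case 0
    then show ?case
      using fun_cong[OF bottom, of a] by (simp add: bottom_part_def)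
  next
    case (Suc j)
    define b where "b = a - e 3"
    have a: "a = b + e 3" and b3: "b $ 3 = t 3 + j"
      using Suc.prems by (auto simp: b_def vec_eq_iff axis_def)
    have "dunkl_factor k 3 (b $ 3 + 1) \<noteq> 0"
      using dunkl_factor_eq_0_iff[of "b $ 3 + 1" 3] b3 by simp
    moreover have "p (b + e 1) = 0" "p (b + e 2) = 0"
      using Suc.IH b3 by (simp_all add: axis_def)
    ultimately show "p a = 0"
      using dirac_eq_0_propagate_zero[of k p b] dirac a by simp
  qed
  have "p a = 0" for a
  proof (cases "t 3 \<le> a $ 3")
    case True
    then show ?thesis
      using on_layer[of a "a $ 3 - t 3"] by simp
  next
    case False
    then show ?thesis
      using supp[of a] cone_lower_bound[of a n 3] by auto
  qed
  then show ?thesis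
    by (simp add: fun_eq_iff)
qed

(* extend inverts bottom_part on Mcone n; lift_layers q j is the part of x_3-degree t 3 + j. *)

primrec lift_layers :: "cpoly \<Rightarrow> nat \<Rightarrow> cpoly" where
  "lift_layers q 0 = q"
| "lift_layers q (Suc j) =
     (\<lambda>a. if a $ 3 = t 3 + Suc j then dirac_lift k (lift_layers q j) (a - e 3) else 0)"

definition extend :: "cpoly \<Rightarrow> cpoly" where
  "extend q = (\<lambda>a. lift_layers q (a $ 3 - t 3) a)"

lemma layer_step:
  assumes "b + e i \<in> layer n j" and "i \<noteq> 3" and "t i \<le> b $ i"
  shows "b + e 3 \<in> layer n (Suc j)"
  using assms exhaust_3[of i] by (auto simp: layer_def cone_def sum_3 forall_3 axis_def)

lemma lift_layers_supp:
  assumes q: "q \<in> suppset (layer n 0)"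
  shows "lift_layers q j \<in> suppset (layer n j)"
proof (induction j)
  case 0
  then show ?case
    using q by simp
next
  case (Suc j)
  show ?case
    unfolding suppset_def
  proof (intro CollectI allI impI)
    fix a assume nz: "lift_layers q (Suc j) a \<noteq> 0"
    define b where "b = a - e 3"
    have a3: "a $ 3 = t 3 + Suc j" and lift: "dirac_lift k (lift_layers q j) b \<noteq> 0"
      using nz by (auto simp: b_def split: if_splits)
    have a: "a = b + e 3"
      using a3 by (auto simp: b_def vec_eq_iff axis_def)
    obtain i where i: "i \<noteq> 3" "lift_layers q j (b + e i) \<noteq> 0"
        "dunkl_factor k i (b $ i + 1) \<noteq> 0"
      using dirac_lift_nonzero[OF lift] by blast
    have "b + e i \<in> layer n j"
      using Suc.IH i(2) by (auto simp: suppset_def)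
    moreover from this have "t i \<le> b $ i + 1"
      using cone_lower_bound[of "b + e i" n i] by (simp add: layer_def)
    then have "t i \<le> b $ i"
      using dunkl_factor_eq_0_iff[of "b $ i + 1" i] i(3) by simp
    ultimately show "a \<in> layer n (Suc j)"
      using layer_step i(1) a by blast
  qed
qed

lemma extend_supp:
  assumes "q \<in> suppset (layer n 0)"
  shows "extend q \<in> suppset (cone n)"
  using lift_layers_supp[OF assms] by (auto simp: suppset_def extend_def layer_def)

lemma dirac_extend:
  assumes q: "q \<in> suppset (layer n 0)"
  shows "dirac k (extend q) = 0"
proof (rule ext)
  fix b
  have below: "extend q a = 0" if "a $ 3 < t 3" for a
    using extend_supp[OF q] cone_lower_bound[of a n 3] that by (auto simp: suppset_def)
  show "dirac k (extend q) b = 0 b"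
  proof (cases "t 3 \<le> b $ 3")
    case True
    define j where "j = b $ 3 - t 3"
    have "(b + e 3) - e 3 = b"
      by (simp add: vec_eq_iff)
    then have "extend q (b + e 3) = dirac_lift k (lift_layers q j) b"
      using True by (simp add: extend_def j_def axis_def Suc_diff_le)
    also have "\<dots> = dirac_lift k (extend q) b"
      by (rule dirac_lift_cong) (simp_all add: extend_def j_def axis_def)
    finally show ?thesis
      using dirac_eq_0_iff_lift dunkl_factor_eq_0_iff[of "b $ 3 + 1" 3] True by simp
  next
    case False
    then have "extend q (b + e 1) = 0" "extend q (b + e 2) = 0"
      using below by (simp_all add: axis_def)
    moreover have "dunkl_factor k 3 (b $ 3 + 1) * extend q (b + e 3) $ s = 0" for s
      using False below[of "b + e 3"] dunkl_factor_eq_0_iff[of "b $ 3 + 1" 3]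
      by (cases "b $ 3 + 1 = t 3") (auto simp: axis_def)
    ultimately show ?thesis
      by (simp add: vec_eq_iff forall_2 dirac_apply)
  qed
qed

lemma extend_in_Mcone: "q \<in> suppset (layer n 0) \<Longrightarrow> extend q \<in> Mcone n"
  by (simp add: Mcone_def extend_supp dirac_extend)

lemma bottom_part_extend: "q \<in> suppset (layer n 0) \<Longrightarrow> bottom_part (extend q) = q"
  by (auto simp: fun_eq_iff bottom_part_def extend_def suppset_def layer_def)

lemma bottom_part_image: "bottom_part ` Mcone n = suppset (layer n 0)"
proof
  show "bottom_part ` Mcone n \<subseteq> suppset (layer n 0)"
    by (auto simp: Mcone_def suppset_def bottom_part_def layer_def split: if_splits)
  show "suppset (layer n 0) \<subseteq> bottom_part ` Mcone n"
    using bottom_part_extend extend_in_Mcone by (metis image_eqI subsetI)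
qed

lemma inj_on_bottom_part: "inj_on bottom_part (Mcone n)"
  using cs_pair.linear_inj_on_iff_eq_0[OF linear_bottom_part subspace_Mcone]
    Mcone_eq_0_if_bottom_part_eq_0 by blast

lemma bij_betw_bottom_layer: "bij_betw (\<lambda>a. a $ 1) (layer n 0) {t 1 .. n - t 2 - t 3}"
proof (rule bij_betw_imageI)
  show "inj_on (\<lambda>a. a $ 1) (layer n 0)"
    by (rule inj_onI) (auto simp: layer_def cone_def vec_eq_iff forall_3 sum_3)
  show "(\<lambda>a. a $ 1) ` layer n 0 = {t 1 .. n - t 2 - t 3}"
  proof
    show "(\<lambda>a. a $ 1) ` layer n 0 \<subseteq> {t 1 .. n - t 2 - t 3}"
      by (auto simp: layer_def cone_def sum_3 forall_3)
    show "{t 1 .. n - t 2 - t 3} \<subseteq> (\<lambda>a. a $ 1) ` layer n 0"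
    proof
      fix x assume "x \<in> {t 1 .. n - t 2 - t 3}"
      then have "vector [x, n - t 3 - x, t 3] \<in> layer n 0"
        using odd_pos[OF odd_t[of 1]] by (auto simp: layer_def cone_def sum_3 forall_3)
      then show "x \<in> (\<lambda>a. a $ 1) ` layer n 0"
        by (rule rev_image_eqI) simp
    qed
  qed
qed

lemma card_bottom_layer:
  "card (layer n 0) = (if t 1 + t 2 + t 3 \<le> n then n - (t 1 + t 2 + t 3) + 1 else 0)"
  using bij_betw_same_card[OF bij_betw_bottom_layer] odd_pos[OF odd_t[of 1]] by auto

lemma dim_Mcone: "cs.dim (Mcone n) = 2 * card (layer n 0)"
proof -
  have "cs.dim (Mcone n) = cs.dim (bottom_part ` Mcone n)"
    using cs_pair.dim_image_eq_of_inj_on[OF subspace_Mcone linear_bottom_part inj_on_bottom_part]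
    by simp
  also have "\<dots> = 2 * card (layer n 0)"
    using dim_suppset bij_betw_finite[OF bij_betw_bottom_layer] by (simp add: bottom_part_image)
  finally show ?thesis .
qed

end

lemma odd_weights_if_tpar_finite:
  assumes "\<And>i. tpar k i \<noteq> \<infinity>"
  obtains t where "odd_weights k t"
proof -
  have t: "odd (nat \<lfloor>- 2 * k $ i\<rfloor>) \<and> k $ i = - real (nat \<lfloor>- 2 * k $ i\<rfloor>) / 2" for i
  proof -
    obtain m :: nat where "odd m" "2 * k $ i = - real m"
      using assms[of i] by (auto simp: tpar_def split: if_splits)
    then show ?thesis
      by simp
  qed
  have "odd_weights k (\<lambda>i. nat \<lfloor>- 2 * k $ i\<rfloor>)"
    by (rule odd_weights.intro) (use t in blast)+
  then show ?thesis
    by (rule that)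
qed

theorem proposition3p5:
  fixes k :: "real ^ 3" and n :: nat
  defines "T \<equiv> tpar k 1 + tpar k 2 + tpar k 3"
  shows "(enat n < T \<longrightarrow> cdim (Mx k n 1 \<inter> Mx k n 2 \<inter> Mx k n 3) = 0)
       \<and> (T \<le> enat n \<longrightarrow> cdim (Mx k n 1 \<inter> Mx k n 2 \<inter> Mx k n 3) = 2 * (n - the_enat T + 1))"
proof (cases "\<forall>i. tpar k i \<noteq> \<infinity>")
  case True
  then obtain t where "odd_weights k t"
    using odd_weights_if_tpar_finite by blast
  then interpret odd_weights k t .
  have "T = enat (t 1 + t 2 + t 3)"
    by (simp add: T_def tpar_eq)
  moreover have "cdim (Mx k n 1 \<inter> Mx k n 2 \<inter> Mx k n 3) = 2 * card (layer n 0)"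
    by (simp add: cdim_def Mx_inter_eq_Mcone dim_Mcone)
  ultimately show ?thesis
    using card_bottom_layer[of n] by auto
next
  case False
  then obtain i where i: "tpar k i = \<infinity>"
    by blast
  then have "Mx k n 1 \<inter> Mx k n 2 \<inter> Mx k n 3 \<subseteq> {0}"
    using Mx_subset_0_if_tpar_infinite exhaust_3[of i] by blast
  then have "cdim (Mx k n 1 \<inter> Mx k n 2 \<inter> Mx k n 3) = 0"
    using cs.dim_unique[of "{}" _ 0] cs.independent_empty by (simp add: cdim_def cs.span_empty)
  moreover have "T = \<infinity>"
    using i exhaust_3[of i] by (auto simp: T_def)
  ultimately show ?thesis
    by simp
qed

end
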